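(* Let $v_1\ge v_2>0$, $m\in\mathbb{Z}_{\ge1}$, $\alpha\in(0,1)$ and $0<b\le m$; put $\delta=\frac{2m+1}{m+1}$ and $\sigma=\frac{2m+1}{m}$. Let $(X,Y)$ be a strategy profile with $\mathbf{E}(X)=m+\alpha$ and $\mathbf{E}(Y)=b$ such that: $\frac{m(m+1)}{b}=\frac{v_1}{2}$; $(X,Y)$ is a Nash equilibrium of the General Lotto game $\Gamma(m+\alpha,b)$; $Y=\left(1-\frac bm\right)\delta_0+\frac bmU_{\mathrm{E}}^m$; and (a) if $0<\alpha\le\frac{m+1}{2m+1}$, $X=\lambda_{\mathrm{O}}\big((1-\alpha)U_{\mathrm{O}}^m+\alpha U_{\mathrm{O}}^{m+1}\big)+\lambda_{\mathrm{E}}\big((1-\alpha)U_{\mathrm{E}}^m+\alpha U_{\mathrm{O}}^{m+1}\big)+\sum_{j=1}^m\lambda_j\big(\alpha\delta V_j^m+(1-\alpha\delta)U_{\mathrm{O}}^m\big)+\sum_{j=1}^m\kappa_j\big(\alpha\delta V_j^m+(1-\alpha\delta)U_{\mathrm{E}}^m\big)$; (b) if $\frac{m+1}{2m+1}<\alpha<1$, $X=\lambda_{\mathrm{O}}\big((1-\alpha)U_{\mathrm{O}}^m+\alpha U_{\mathrm{O}}^{m+1}\big)+\lambda_{\mathrm{E}}\big((1-\alpha)U_{\mathrm{E}}^m+\alpha U_{\mathrm{O}}^{m+1}\big)+\sum_{j=1}^m\lambda_j\big((1-\alpha)\sigma V_j^m+(1-(1-\alpha)\sigma)U_{\mathrm{O}}^{m+1}\big)$,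 with $\kappa_1=\dots=\kappa_m:=0$; where all coefficients $\lambda_{\mathrm{O}},\lambda_{\mathrm{E}},\lambda_j,\kappa_j$ are nonnegative and sum to $1$, $\lambda_{\mathrm{E}}=0$ and $\sum_{j=1}^m\kappa_j=0$ if $m>b$, and $\frac{m+1-\alpha}{m(m+1)}-\frac{2}{v_2}=\lambda_{\mathrm{E}}\frac{1-\alpha}{m(m+1)}+\sum_{j=1}^m\kappa_j\frac{1}{m+1}\left(\frac{1-\alpha}{m}-\frac{\alpha}{m+1}\right)$. Then $(X,Y)$ is a Nash equilibrium of the discrete all-pay auction with valuations $v_1,v_2$.
   Context: Discrete all-pay auction: two players, 1 and 2, value a prize at $v_1$ and $v_2$ respectively, where $v_1\ge v_2>0$. A (mixed) strategy is a probability distribution on $\mathbb{Z}_{\ge 0}$ with finite mean, identified with a $\mathbb{Z}_{\ge0}$-valued random variable; the two players' choices are independent. If player 1 uses $X$ and player 2 uses $Y$, the expected payoffs are $P^1(X,Y)=v_1\Pr(X>Y)+\frac{v_1}{2}\Pr(X=Y)-\mathbf{E}(X)$ and $P^2(Y,X)=v_2\Pr(Y>X)+\frac{v_2}{2}\Pr(X=Y)-\mathbf{E}(Y)$. A Nash equilibrium of the all-pay auction is a pair $(X,Y)$ with $P^1(X,Y)\ge P^1(X',Y)$ and $P^2(Y,X)\ge P^2(Y',X)$ for all strategies $X',Y'$. $\delta_j$ denotes the point mass at $j$; $\lambda A+(1-\lambda)B$ denotes the mixture of distributions $A$ and $B$ (similarly for longer convex combinations). Discrete General Lotto game: for reals $a,b\ge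 0$, in $\Gamma(a,b)$ player 1 chooses a distribution $X$ on $\mathbb{Z}_{\ge0}$ with $\mathbf{E}(X)=a$ and player 2 chooses a distribution $Y$ on $\mathbb{Z}_{\ge 0}$ with $\mathbf{E}(Y)=b$ (independently); the payoff to player 1 is $H(X,Y)=\Pr(X>Y)-\Pr(X<Y)$ and to player 2 is $H(Y,X)=-H(X,Y)$. A Nash equilibrium of $\Gamma(a,b)$ is a pair $(X,Y)$ from these strategy sets such that neither player can increase her payoff by switching to another strategy in her own strategy set. Special distributions: for $m\ge1$, $U_{\mathrm{O}}^m$ is the uniform distribution on $\{1,3,\dots,2m-1\}$; for $m\ge0$, $U_{\mathrm{E}}^m$ is the uniform distribution on $\{0,2,\dots,2m\}$; for $m\ge1$ and $1\le j\le m$, $V_j^m=\sum_{i=1}^{j-1}\frac{2}{2m+1}\delta_{2i-1}+\frac{1}{2m+1}\delta_{2j-1}+\sum_{i=j}^{m}\frac{2}{2m+1}\delta_{2i}$. *)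

theory Defs
  imports "HOL-Probability.Probability"
begin

definition finite_mean :: "nat pmf \<Rightarrow> bool" where
  "finite_mean X \<longleftrightarrow> integrable (measure_pmf X) real"

definition mean :: "nat pmf \<Rightarrow> real" where
  "mean X = measure_pmf.expectation X real"

definition pr_gt :: "nat pmf \<Rightarrow> nat pmf \<Rightarrow> real" where
  "pr_gt X Y = measure_pmf.prob (pair_pmf X Y) {p. fst p > snd p}"

definition pr_eq :: "nat pmf \<Rightarrow> nat pmf \<Rightarrow> real" where
  "pr_eq X Y = measure_pmf.prob (pair_pmf X Y) {p. fst p = snd p}"

definition allpay_payoff :: "real \<Rightarrow> nat pmf \<Rightarrow> nat pmf \<Rightarrow> real" where
  "allpay_payoff v X Y = v * pr_gt X Y + v / 2 * pr_eq X Y - mean X"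

definition allpay_NE :: "real \<Rightarrow> real \<Rightarrow> nat pmf \<Rightarrow> nat pmf \<Rightarrow> bool" where
  "allpay_NE v1 v2 X Y \<longleftrightarrow> finite_mean X \<and> finite_mean Y \<and>
     (\<forall>X'. finite_mean X' \<longrightarrow> allpay_payoff v1 X' Y \<le> allpay_payoff v1 X Y) \<and>
     (\<forall>Y'. finite_mean Y' \<longrightarrow> allpay_payoff v2 Y' X \<le> allpay_payoff v2 Y X)"

definition lotto_H :: "nat pmf \<Rightarrow> nat pmf \<Rightarrow> real" where
  "lotto_H X Y = pr_gt X Y - pr_gt Y X"

definition lotto_NE :: "real \<Rightarrow> real \<Rightarrow> nat pmf \<Rightarrow> nat pmf \<Rightarrow> bool" where
  "lotto_NE a b X Y \<longleftrightarrow>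
     finite_mean X \<and> mean X = a \<and> finite_mean Y \<and> mean Y = b \<and>
     (\<forall>X'. finite_mean X' \<and> mean X' = a \<longrightarrow> lotto_H X' Y \<le> lotto_H X Y) \<and>
     (\<forall>Y'. finite_mean Y' \<and> mean Y' = b \<longrightarrow> lotto_H Y' X \<le> lotto_H Y X)"

text \<open>Probability mass functions of the special distributions
  (mixtures are expressed pointwise on the mass functions).\<close>

definition uO :: "nat \<Rightarrow> nat \<Rightarrow> real" where
  "uO m k = (if odd k \<and> k \<le> 2 * m - 1 then 1 / real m else 0)"

definition uE :: "nat \<Rightarrow> nat \<Rightarrow> real" where
  "uE m k = (if even k \<and> k \<le> 2 * m then 1 / (real m + 1) else 0)"

definition vV :: "nat \<Rightarrow> nat \<Rightarrow> nat \<Rightarrow> real" where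
  "vV m j k =
     (if odd k \<and> k + 1 < 2 * j then 2 / (2 * real m + 1)
      else if k + 1 = 2 * j then 1 / (2 * real m + 1)
      else if even k \<and> 2 * j \<le> k \<and> k \<le> 2 * m then 2 / (2 * real m + 1)
      else 0)"

end

theory Submission
  imports Defs
begin

text \<open>Write \<open>mid_cdf Z k = P(Z < k) + P(Z = k)/2\<close>. Against an independent opponent playing \<open>Z\<close>,
  bidding \<open>k\<close> earns \<open>v * mid_cdf Z k - k\<close> in the all-pay auction and \<open>2 * mid_cdf Z k - 1\<close> in the
  General Lotto game, so a strategy is a best reply iff it is supported on maximisers of this function.

  Player 1: the explicit form of \<open>Y\<close> and \<open>v1 = 2m(m+1)/b\<close> make \<open>v1 * mid_cdf Y k - k\<close> constant on
  \<open>{1, ..., 2m+1}\<close> and not larger elsewhere, with equality at 0 only if \<open>b = m\<close>; \<open>X\<close> is supported on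
  \<open>{1, ..., 2m+1}\<close>, and charges 0 only if \<open>b = m\<close>.

  Player 2: \<open>Y\<close> charges every even number up to \<open>2m\<close>, so its optimality in the Lotto game against
  mean-preserving three-point perturbations forces \<open>mid_cdf X\<close> to be affine on \<open>0, 2, ..., 2m\<close> and to
  lie below this line everywhere. The slope of the line is \<open>(mid_cdf X 2 - mid_cdf X 0)/2\<close>, which the
  explicit form of \<open>X\<close> and the linear relation between its coefficients make equal to \<open>1/v2\<close>.
  Hence \<open>v2 * mid_cdf X k - k\<close> is maximal on the even numbers up to \<open>2m\<close>, which carry \<open>Y\<close>.

  The hypotheses \<open>v1 \<ge> v2\<close>, \<open>0 < \<alpha> < 1\<close>, the values of the means and the nonnegativity of
  \<open>lO\<close>, \<open>lE\<close>, \<open>lam\<close> are not needed.\<close>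

definition mid_cdf :: "nat pmf \<Rightarrow> nat \<Rightarrow> real" where
  "mid_cdf X k = measure_pmf.prob X {..<k} + pmf X k / 2"

lemma prob_atMost_eq:
  fixes X :: "nat pmf"
  shows "measure_pmf.prob X {..k} = measure_pmf.prob X {..<k} + pmf X k"
  by (simp add: measure_measure_pmf_finite lessThan_Suc_atMost[symmetric])

lemma mid_cdf_bounds: "0 \<le> mid_cdf X k" "mid_cdf X k \<le> 1"
  using prob_atMost_eq[of X k] measure_pmf.prob_le_1[of X "{..k}"]
    measure_nonneg[of X "{..<k}"] pmf_nonneg[of X k]
  unfolding mid_cdf_def by linarith+

lemma prob_pair_pmf_eq_integral:
  "measure_pmf.prob (pair_pmf A B) S = (\<integral>a. measure_pmf.prob B {b. (a, b) \<in> S} \<partial>measure_pmf A)"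
proof -
  have "pair_pmf A B = bind_pmf A (\<lambda>a. map_pmf (Pair a) B)"
    unfolding pair_pmf_def by (simp add: map_pmf_def)
  then have "measure_pmf (pair_pmf A B) = measure_pmf A \<bind> (\<lambda>a. measure_pmf (map_pmf (Pair a) B))"
    by (simp add: measure_pmf_bind)
  then show ?thesis
    by (simp, subst measure_pmf.measure_bind[where N="count_space UNIV"])
       (auto simp: comp_def measure_subprob vimage_def)
qed

lemma prob_greaterThan_eq:
  fixes B :: "nat pmf"
  shows "measure_pmf.prob B {a<..} = 1 - measure_pmf.prob B {..<a} - pmf B a"
proof -
  have "measure_pmf.prob B {a<..} = measure_pmf.prob B (space (measure_pmf B) - {..a})"
    by (rule arg_cong[where f="measure_pmf.prob B"]) auto
  also have "\<dots> = 1 - measure_pmf.prob B {..a}"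
    by (rule measure_pmf.prob_compl) simp
  finally show ?thesis by (simp add: prob_atMost_eq)
qed

lemma lotto_H_eq_integral: "lotto_H A B = (\<integral>a. 2 * mid_cdf B a - 1 \<partial>measure_pmf A)"
proof -
  have int: "integrable (measure_pmf A) (\<lambda>a. measure_pmf.prob B (S a))" for S :: "nat \<Rightarrow> nat set"
    by (rule measure_pmf.integrable_const_bound[where B=1]) auto
  have "pr_gt B A = (\<integral>a. measure_pmf.prob B {a<..} \<partial>measure_pmf A)"
    unfolding pr_gt_def by (subst pair_commute_pmf) (simp add: prob_pair_pmf_eq_integral greaterThan_def)
  moreover have "pr_gt A B = (\<integral>a. measure_pmf.prob B {..<a} \<partial>measure_pmf A)"
    unfolding pr_gt_def by (simp add: prob_pair_pmf_eq_integral lessThan_def)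
  ultimately have "lotto_H A B = (\<integral>a. measure_pmf.prob B {..<a} - measure_pmf.prob B {a<..} \<partial>measure_pmf A)"
    unfolding lotto_H_def using int by simp
  also have "\<dots> = (\<integral>a. 2 * mid_cdf B a - 1 \<partial>measure_pmf A)"
    by (simp add: prob_greaterThan_eq mid_cdf_def algebra_simps)
  finally show ?thesis .
qed

lemma allpay_payoff_eq_integral:
  assumes "finite_mean A"
  shows "allpay_payoff v A B = (\<integral>a. v * mid_cdf B a - real a \<partial>measure_pmf A)"
proof -
  have int: "integrable (measure_pmf A) (\<lambda>a. measure_pmf.prob B (S a))" for S :: "nat \<Rightarrow> nat set"
    by (rule measure_pmf.integrable_const_bound[where B=1]) auto
  have int_pmf: "integrable (measure_pmf A) (pmf B)"
    by (rule measure_pmf.integrable_const_bound[where B=1]) (auto simp: pmf_le_1)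
  have "pr_eq A B = (\<integral>a. pmf B a \<partial>measure_pmf A)"
    unfolding pr_eq_def by (simp add: prob_pair_pmf_eq_integral measure_pmf_single)
  moreover have "pr_gt A B = (\<integral>a. measure_pmf.prob B {..<a} \<partial>measure_pmf A)"
    unfolding pr_gt_def by (simp add: prob_pair_pmf_eq_integral lessThan_def)
  moreover have "integrable (measure_pmf A) real"
    using assms by (simp add: finite_mean_def)
  ultimately show ?thesis
    unfolding allpay_payoff_def mean_def mid_cdf_def using int int_pmf
    by (simp add: algebra_simps)
qed

lemma allpay_best_response:
  assumes X: "finite_mean X" and X': "finite_mean X'"
    and bound: "\<And>k. v * mid_cdf Y k - real k \<le> M"
    and attained: "\<And>k. k \<in> set_pmf X \<Longrightarrow> v * mid_cdf Y k - real k = M"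
  shows "allpay_payoff v X' Y \<le> allpay_payoff v X Y"
proof -
  have "integrable (measure_pmf X') (mid_cdf Y)"
    using mid_cdf_bounds by (intro measure_pmf.integrable_const_bound[where B=1]) auto
  then have "integrable (measure_pmf X') (\<lambda>a. v * mid_cdf Y a - real a)"
    using X' unfolding finite_mean_def by (intro Bochner_Integration.integrable_diff) auto
  then have "allpay_payoff v X' Y \<le> (\<integral>a. M \<partial>measure_pmf X')"
    unfolding allpay_payoff_eq_integral[OF X'] by (rule integral_mono) (simp_all add: bound)
  also have "\<dots> = (\<integral>a. M \<partial>measure_pmf X)" by simp
  also have "\<dots> = allpay_payoff v X Y"
    unfolding allpay_payoff_eq_integral[OF X]
    by (rule integral_cong_AE) (auto simp: AE_measure_pmf_iff attained)
  finally show ?thesis .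
qed

lemma lotto_NE_perturbation_le:
  fixes e :: "nat \<Rightarrow> real"
  assumes NE: "lotto_NE a b X Y" and supp: "set_pmf Y \<subseteq> {..N}"
    and nonneg: "\<And>i. 0 \<le> pmf Y i + e i" and outside: "\<And>i. N < i \<Longrightarrow> e i = 0"
    and mass: "(\<Sum>i\<le>N. e i) = 0" and moment: "(\<Sum>i\<le>N. e i * real i) = 0"
  shows "(\<Sum>i\<le>N. e i * mid_cdf X i) \<le> 0"
proof -
  define f where "f i = pmf Y i + e i" for i
  have f_out: "f i = 0" if "N < i" for i
  proof -
    have "i \<notin> set_pmf Y" using that supp by auto
    then show ?thesis using that outside by (simp add: f_def set_pmf_iff)
  qed
  have "(\<Sum>i\<le>N. f i) = 1"
    using mass sum_pmf_eq_1[of "{..N}" Y] supp by (auto simp: f_def sum.distrib)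
  then have total: "(\<integral>\<^sup>+i. ennreal (f i) \<partial>count_space UNIV) = 1"
    using nonneg f_out
    by (subst nn_integral_count_space'[where A="{..N}"]) (auto simp: f_def sum_ennreal)
  define Y' where "Y' = embed_pmf f"
  have pmf_Y': "pmf Y' i = f i" for i
    unfolding Y'_def using nonneg total by (intro pmf_embed_pmf) (auto simp: f_def)
  have supp': "set_pmf Y' \<subseteq> {..N}"
    using f_out by (auto simp: set_pmf_iff pmf_Y') (meson not_le)
  have mean_eq: "mean Z = (\<Sum>i\<le>N. real i * pmf Z i)" if "set_pmf Z \<subseteq> {..N}" for Z
    unfolding mean_def using that by (intro integral_measure_pmf_real) auto
  have "finite_mean Y'"
    unfolding finite_mean_def using supp'
    by (intro integrable_measure_pmf_finite) (auto intro: finite_subset)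
  moreover have "mean Y' = mean Y"
    using supp supp' moment
    by (simp add: mean_eq pmf_Y' f_def algebra_simps sum.distrib)
  ultimately have "lotto_H Y' X \<le> lotto_H Y X"
    using NE by (simp add: lotto_NE_def)
  moreover have "lotto_H Z X = (\<Sum>i\<le>N. (2 * mid_cdf X i - 1) * pmf Z i)"
    if "set_pmf Z \<subseteq> {..N}" for Z
    unfolding lotto_H_eq_integral using that by (intro integral_measure_pmf_real) auto
  ultimately have "0 \<ge> (\<Sum>i\<le>N. (2 * mid_cdf X i - 1) * e i)"
    using supp supp' by (simp add: pmf_Y' f_def distrib_left sum.distrib)
  also have "(\<Sum>i\<le>N. (2 * mid_cdf X i - 1) * e i) = 2 * (\<Sum>i\<le>N. e i * mid_cdf X i) - (\<Sum>i\<le>N. e i)"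
    by (simp add: algebra_simps sum.distrib sum_subtractf sum_distrib_left)
  finally show ?thesis using mass by simp
qed

lemma lotto_NE_three_point_perturbation_le:
  assumes NE: "lotto_NE a b X Y" and supp: "set_pmf Y \<subseteq> {..N}"
    and le: "p \<le> N" "q \<le> N" "r \<le> N" and distinct: "p \<noteq> q" "p \<noteq> r" "q \<noteq> r"
    and nonneg: "0 \<le> pmf Y p + x" "0 \<le> pmf Y q + y" "0 \<le> pmf Y r + z"
    and mass: "x + y + z = 0" and moment: "x * real p + y * real q + z * real r = 0"
  shows "x * mid_cdf X p + y * mid_cdf X q + z * mid_cdf X r \<le> 0"
proof -
  define e where "e i = (if i = p then x else 0) + (if i = q then y else 0) + (if i = r then z else 0)"
    for i
  have sum_e: "(\<Sum>i\<le>N. e i * g i) = x * g p + y * g q + z * g r" for g :: "nat \<Rightarrow> real"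
    using le by (simp add: e_def distrib_right sum.distrib if_distrib[where f="\<lambda>c. c * _"] cong: if_cong)
  have "(\<Sum>i\<le>N. e i * mid_cdf X i) \<le> 0"
    using sum_e[of "\<lambda>_. 1"] sum_e[of real] nonneg distinct le mass moment
    by (intro lotto_NE_perturbation_le[OF NE supp]) (auto simp: e_def)
  then show ?thesis by (simp add: sum_e)
qed

context
  fixes a b c :: real and X Y :: "nat pmf" and m :: nat
  assumes NE: "lotto_NE a b X Y" and supp: "set_pmf Y \<subseteq> {..2 * m}"
    and c_pos: "0 < c" and even_mass: "\<And>i. i \<le> m \<Longrightarrow> c \<le> pmf Y (2 * i)"
begin

lemma mid_cdf_even_second_diff:
  assumes "t + 2 \<le> m"
  shows "mid_cdf X (2 * t) + mid_cdf X (2 * (t + 2)) = 2 * mid_cdf X (2 * (t + 1))"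
proof -
  have mass: "c \<le> pmf Y (2 * t)" "c \<le> pmf Y (2 * (t + 1))" "c \<le> pmf Y (2 * (t + 2))"
    using even_mass[of t] even_mass[of "t + 1"] even_mass[of "t + 2"] assms by simp_all
  have "s * (mid_cdf X (2 * t) + mid_cdf X (2 * (t + 2)) - 2 * mid_cdf X (2 * (t + 1))) \<le> 0"
    if "s = c / 2 \<or> s = - c / 2" for s
    using lotto_NE_three_point_perturbation_le[OF NE supp,
        of "2 * t" "2 * (t + 2)" "2 * (t + 1)" s s "-2 * s"] that mass c_pos assms
    by (auto simp: algebra_simps)
  from this[of "c / 2"] this[of "- c / 2"] show ?thesis
    using c_pos by (simp add: mult_le_0_iff zero_le_mult_iff)
qed

lemma mid_cdf_even_linear:
  "i \<le> m \<Longrightarrow> mid_cdf X (2 * i) = mid_cdf X 0 + real i * (mid_cdf X 2 - mid_cdf X 0)"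
proof (induction i rule: less_induct)
  case (less i)
  define d where "d = mid_cdf X 2 - mid_cdf X 0"
  consider "i = 0" | "i = 1" | t where "i = t + 2"
    by (metis One_nat_def add_2_eq_Suc' not0_implies_Suc)
  then show ?case
  proof cases
    case 3
    have "mid_cdf X (2 * t) = mid_cdf X 0 + real t * d"
      "mid_cdf X (2 * (t + 1)) = mid_cdf X 0 + real (t + 1) * d"
      using less.IH[of t] less.IH[of "t + 1"] less.prems 3 by (simp_all add: d_def)
    moreover have "real (t + 1) * d = real t * d + d" "real (t + 2) * d = real t * d + 2 * d"
      by (simp_all add: algebra_simps)
    moreover have "mid_cdf X (2 * t) + mid_cdf X (2 * (t + 2)) = 2 * mid_cdf X (2 * (t + 1))"
      using mid_cdf_even_second_diff less.prems 3 by simp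
    ultimately show ?thesis
      unfolding 3 d_def[symmetric] by linarith
  qed simp_all
qed

lemma mid_cdf_le_chord:
  assumes "1 \<le> m"
  shows "mid_cdf X k \<le> mid_cdf X 0 + real k * (mid_cdf X 2 - mid_cdf X 0) / 2"
proof -
  define G where "G = mid_cdf X"
  define d where "d = G 2 - G 0"
  have lin: "G (2 * i) = G 0 + real i * d" if "i \<le> m" for i
    using mid_cdf_even_linear[OF that] by (simp add: G_def d_def)
  consider "even k" "k \<le> 2 * m" | t where "k = 2 * t + 1" "k \<le> 2 * m" | "2 * m < k"
    by (metis oddE not_le)
  then show ?thesis
  proof cases
    case 1
    then show ?thesis using lin[of "k div 2"] by (auto simp: G_def d_def elim!: evenE)
  next
    case 2
    then have t_le: "t + 1 \<le> m" by simp
    then have "c \<le> pmf Y (2 * t)" "c \<le> pmf Y (2 * t + 2)"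
      using even_mass[of t] even_mass[of "t + 1"] by simp_all
    then have "c * (G k - (G (2 * t) + G (2 * t + 2)) / 2) \<le> 0"
      using lotto_NE_three_point_perturbation_le[OF NE supp,
          of "2 * t + 1" "2 * t" "2 * t + 2" c "- c / 2" "- c / 2"] 2 t_le c_pos
      by (simp add: G_def algebra_simps)
    then have "G k \<le> (G (2 * t) + G (2 * t + 2)) / 2"
      using c_pos by (simp add: mult_le_0_iff)
    also have "(G (2 * t) + G (2 * t + 2)) / 2 = G 0 + real k * d / 2"
      using lin[of t] lin[of "t + 1"] t_le 2 by (simp add: field_simps)
    finally show ?thesis by (simp add: G_def d_def)
  next
    case 3
    define w where "w = c * (2 * real m / real k)"
    have supp_k: "set_pmf Y \<subseteq> {..k}" using supp 3 by auto
    have w: "0 < w" "w < c" using c_pos 3 assms by (simp_all add: w_def field_simps)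
    have "c \<le> pmf Y 0" "c \<le> pmf Y (2 * m)" using even_mass[of 0] even_mass[of m] by simp_all
    then have "w * G k + (c - w) * G 0 - c * G (2 * m) \<le> 0"
      using lotto_NE_three_point_perturbation_le[OF NE supp_k,
          of k 0 "2 * m" w "c - w" "- c"] 3 w assms
      by (simp add: G_def w_def algebra_simps)
    then have "w * (G k - (G 0 + real k * d / 2)) \<le> 0"
      using lin[of m] 3 by (simp add: w_def field_simps)
    then show ?thesis using w by (simp add: G_def d_def mult_le_0_iff)
  qed
qed

lemma allpay_best_response_of_lotto_NE:
  assumes "1 \<le> m" "0 < v" and slope: "v * (mid_cdf X 2 - mid_cdf X 0) = 2"
    and even: "\<And>k. k \<in> set_pmf Y \<Longrightarrow> even k" and "finite_mean Y" "finite_mean Y'"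
  shows "allpay_payoff v Y' X \<le> allpay_payoff v Y X"
proof (rule allpay_best_response[where M="v * mid_cdf X 0"])
  fix k
  have "v * mid_cdf X k \<le> v * (mid_cdf X 0 + real k * (mid_cdf X 2 - mid_cdf X 0) / 2)"
    using mid_cdf_le_chord[OF assms(1)] assms(2) by (intro mult_left_mono) auto
  also have "\<dots> = v * mid_cdf X 0 + real k * (v * (mid_cdf X 2 - mid_cdf X 0)) / 2"
    by (simp add: algebra_simps)
  also have "\<dots> = v * mid_cdf X 0 + real k"
    by (simp add: slope)
  finally show "v * mid_cdf X k - real k \<le> v * mid_cdf X 0" by simp
next
  fix k assume k: "k \<in> set_pmf Y"
  then obtain i where "k = 2 * i" using even by (blast elim: evenE)
  moreover have "k \<le> 2 * m" using k supp by auto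
  ultimately have "i \<le> m" by simp
  then have "mid_cdf X k = mid_cdf X 0 + real i * (mid_cdf X 2 - mid_cdf X 0)"
    using mid_cdf_even_linear \<open>k = 2 * i\<close> by simp
  then have "v * mid_cdf X k = v * mid_cdf X 0 + real i * (v * (mid_cdf X 2 - mid_cdf X 0))"
    by (simp only:) (simp add: algebra_simps)
  then show "v * mid_cdf X k - real k = v * mid_cdf X 0"
    using \<open>k = 2 * i\<close> by (simp add: slope)
qed (use assms in auto)

end

lemma sum_uE_lessThan: "(\<Sum>i<k. uE m i) = real (min ((k + 1) div 2) (m + 1)) / (real m + 1)"
proof (induction k)
  case (Suc k)
  have "min ((Suc k + 1) div 2) (m + 1) = min ((k + 1) div 2) (m + 1) + of_bool (even k \<and> k \<le> 2 * m)"
    by (cases "even k") (auto elim!: evenE oddE simp: min_def)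
  then show ?case
    using Suc by (simp add: uE_def add_divide_distrib)
qed simp

lemma mid_cdf_uE_mixture:
  assumes Y: "\<And>k. pmf Y k = (1 - p) * (if k = 0 then 1 else 0) + p * uE m k" and "1 \<le> k"
  shows "mid_cdf Y k = 1 - p + p * real (min (k + 1) (2 * m + 2)) / (2 * (real m + 1))"
proof -
  have count: "2 * min ((k + 1) div 2) (m + 1) + of_bool (even k \<and> k \<le> 2 * m) = min (k + 1) (2 * m + 2)"
    by (cases "even k") (auto elim!: evenE oddE simp: min_def)
  have "measure_pmf.prob Y {..<k} = (\<Sum>i<k. pmf Y i)"
    by (simp add: measure_measure_pmf_finite)
  also have "\<dots> = 1 - p + p * (\<Sum>i<k. uE m i)"
    using \<open>1 \<le> k\<close>
    by (simp add: Y sum.distrib sum_distrib_left if_distrib[where f="\<lambda>x. _ * x"] cong: if_cong)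
  finally have prob: "measure_pmf.prob Y {..<k} = 1 - p + p * real (min ((k + 1) div 2) (m + 1)) / (real m + 1)"
    by (simp add: sum_uE_lessThan)
  have "mid_cdf Y k = 1 - p
      + p * (2 * real (min ((k + 1) div 2) (m + 1)) + of_bool (even k \<and> k \<le> 2 * m)) / (2 * (real m + 1))"
    unfolding mid_cdf_def prob Y using \<open>1 \<le> k\<close>
    by (simp add: uE_def divide_simps) (simp add: algebra_simps)
  also have "2 * real (min ((k + 1) div 2) (m + 1)) + of_bool (even k \<and> k \<le> 2 * m)
      = real (min (k + 1) (2 * m + 2))"
    unfolding count[symmetric] by simp
  finally show ?thesis by simp
qed

lemma uE_mixture_support:
  assumes Y: "\<And>k. pmf Y k = (1 - p) * (if k = 0 then 1 else 0) + p * uE m k" and "p \<le> 1"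
  shows "k \<in> set_pmf Y \<Longrightarrow> even k \<and> k \<le> 2 * m"
    and "i \<le> m \<Longrightarrow> p / (real m + 1) \<le> pmf Y (2 * i)"
  using assms by (auto simp: set_pmf_iff uE_def split: if_splits)

lemma allpay_best_response_to_uE_mixture:
  assumes Y: "\<And>k. pmf Y k = (1 - p) * (if k = 0 then 1 else 0) + p * uE m k"
    and p: "0 < p" "p \<le> 1" and v: "v * p = 2 * (real m + 1)"
    and supp: "set_pmf X \<subseteq> {..2 * m + 1}" and zero: "0 \<in> set_pmf X \<Longrightarrow> p = 1"
    and "finite_mean X" "finite_mean X'"
  shows "allpay_payoff v X' Y \<le> allpay_payoff v X Y"
proof (rule allpay_best_response[where M="v * (1 - p) + 1"])
  have "0 < v * p" using v by simp
  then have v_pos: "0 < v" using p by (simp add: zero_less_mult_iff)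
  have "v * (1 - p) \<ge> 0" using v_pos p by simp
  have pos: "v * mid_cdf Y k - real k = v * (1 - p) + real (min (k + 1) (2 * m + 2)) - real k"
    if "1 \<le> k" for k
  proof -
    have "v * mid_cdf Y k = v * (1 - p) + (v * p) * real (min (k + 1) (2 * m + 2)) / (2 * (real m + 1))"
      unfolding mid_cdf_uE_mixture[OF Y that] by (simp add: algebra_simps)
    then show ?thesis unfolding v by simp
  qed
  have "v * mid_cdf Y 0 = v * ((1 - p + p / (real m + 1)) / 2)"
    by (simp add: mid_cdf_def Y uE_def)
  also have "\<dots> = v * (1 - p) / 2 + (v * p) / (2 * (real m + 1))"
    by (simp add: ring_distribs add_divide_distrib diff_divide_distrib)
  finally have "v * mid_cdf Y 0 = v * (1 - p) / 2 + (v * p) / (2 * (real m + 1))" .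
  then have zero_val: "v * mid_cdf Y 0 = v * (1 - p) / 2 + 1"
    unfolding v by simp
  show "v * mid_cdf Y k - real k \<le> v * (1 - p) + 1" for k
    using pos[of k] zero_val \<open>v * (1 - p) \<ge> 0\<close> by (cases "k = 0") auto
  show "v * mid_cdf Y k - real k = v * (1 - p) + 1" if "k \<in> set_pmf X" for k
    using pos[of k] zero_val zero supp that by (cases "k = 0") auto
qed fact+

definition mid_incr :: "(nat \<Rightarrow> real) \<Rightarrow> real" where
  "mid_incr f = f 0 / 2 + f 1 + f 2 / 2"

lemma mid_cdf_2_minus_0: "mid_cdf X 2 - mid_cdf X 0 = mid_incr (pmf X)"
  by (simp add: mid_cdf_def mid_incr_def measure_measure_pmf_finite numeral_2_eq_2)

lemma mid_incr_add [simp]: "mid_incr (\<lambda>k. f k + g k) = mid_incr f + mid_incr g"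
  by (simp add: mid_incr_def field_simps)

lemma mid_incr_cmult [simp]: "mid_incr (\<lambda>k. a * f k) = a * mid_incr f"
  by (simp add: mid_incr_def algebra_simps)

lemma mid_incr_sum [simp]: "mid_incr (\<lambda>k. \<Sum>j\<in>J. f j k) = (\<Sum>j\<in>J. mid_incr (f j))"
  by (simp add: mid_incr_def sum.distrib sum_divide_distrib)

lemma mid_incr_uO: "1 \<le> m \<Longrightarrow> mid_incr (uO m) = 1 / real m"
  by (simp add: mid_incr_def uO_def)

lemma mid_incr_uE: "1 \<le> m \<Longrightarrow> mid_incr (uE m) = 1 / (real m + 1)"
  by (simp add: mid_incr_def uE_def divide_simps)

lemma mid_incr_vV: "1 \<le> j \<Longrightarrow> j \<le> m \<Longrightarrow> mid_incr (vV m j) = 2 / (2 * real m + 1)"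
  by (cases "j = 1") (auto simp: mid_incr_def vV_def divide_simps)

definition lotto_strategy_a ::
    "nat \<Rightarrow> real \<Rightarrow> real \<Rightarrow> real \<Rightarrow> (nat \<Rightarrow> real) \<Rightarrow> (nat \<Rightarrow> real) \<Rightarrow> nat \<Rightarrow> real" where
  "lotto_strategy_a m \<alpha> lO lE lam \<kappa> k =
      lO * ((1 - \<alpha>) * uO m k + \<alpha> * uO (m + 1) k)
    + lE * ((1 - \<alpha>) * uE m k + \<alpha> * uO (m + 1) k)
    + (\<Sum>j=1..m. lam j * (\<alpha> * ((2 * real m + 1) / (real m + 1)) * vV m j k
          + (1 - \<alpha> * ((2 * real m + 1) / (real m + 1))) * uO m k))
    + (\<Sum>j=1..m. \<kappa> j * (\<alpha> * ((2 * real m + 1) / (real m + 1)) * vV m j k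
          + (1 - \<alpha> * ((2 * real m + 1) / (real m + 1))) * uE m k))"

definition lotto_strategy_b ::
    "nat \<Rightarrow> real \<Rightarrow> real \<Rightarrow> real \<Rightarrow> (nat \<Rightarrow> real) \<Rightarrow> nat \<Rightarrow> real" where
  "lotto_strategy_b m \<alpha> lO lE lam k =
      lO * ((1 - \<alpha>) * uO m k + \<alpha> * uO (m + 1) k)
    + lE * ((1 - \<alpha>) * uE m k + \<alpha> * uO (m + 1) k)
    + (\<Sum>j=1..m. lam j * ((1 - \<alpha>) * ((2 * real m + 1) / real m) * vV m j k
          + (1 - (1 - \<alpha>) * ((2 * real m + 1) / real m)) * uO (m + 1) k))"

lemma lotto_strategy_a_eq_0:
  "2 * m + 1 < k \<Longrightarrow> lotto_strategy_a m \<alpha> lO lE lam \<kappa> k = 0"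
  "lE = 0 \<Longrightarrow> (\<forall>j\<in>{1..m}. \<kappa> j = 0) \<Longrightarrow> lotto_strategy_a m \<alpha> lO lE lam \<kappa> 0 = 0"
  by (auto simp: lotto_strategy_a_def uO_def uE_def vV_def intro!: sum.neutral)

lemma lotto_strategy_b_eq_0:
  "2 * m + 1 < k \<Longrightarrow> lotto_strategy_b m \<alpha> lO lE lam k = 0"
  "lE = 0 \<Longrightarrow> lotto_strategy_b m \<alpha> lO lE lam 0 = 0"
  by (auto simp: lotto_strategy_b_def uO_def uE_def vV_def intro!: sum.neutral)

lemma mid_incr_lotto_strategy_a:
  assumes m: "1 \<le> m" and sum1: "lO + lE + (\<Sum>j=1..m. lam j) + (\<Sum>j=1..m. \<kappa> j) = 1"
  shows "mid_incr (lotto_strategy_a m \<alpha> lO lE lam \<kappa>) =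
    (real m + 1 - \<alpha>) / (real m * (real m + 1))
    - (lE * ((1 - \<alpha>) / (real m * (real m + 1)))
       + (\<Sum>j=1..m. \<kappa> j * (1 / (real m + 1)) * ((1 - \<alpha>) / real m - \<alpha> / (real m + 1))))"
proof -
  define T where "T = (real m + 1 - \<alpha>) / (real m * (real m + 1))"
  define A where "A = (1 - \<alpha>) / (real m * (real m + 1))"
  define Q where "Q = 1 / (real m + 1) * ((1 - \<alpha>) / real m - \<alpha> / (real m + 1))"
  define a where "a = \<alpha> * ((2 * real m + 1) / (real m + 1))"
  define P where "P k = (1 - \<alpha>) * uO m k + \<alpha> * uO (m + 1) k" for k
  define E where "E k = (1 - \<alpha>) * uE m k + \<alpha> * uO (m + 1) k" for k
  define L where "L j k = a * vV m j k + (1 - a) * uO m k" for j k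
  define K where "K j k = a * vV m j k + (1 - a) * uE m k" for j k
  have m0: "real m > 0" using m by simp
  have "mid_incr P = (1 - \<alpha>) / real m + \<alpha> / (real m + 1)"
    "mid_incr E = (1 - \<alpha>) / (real m + 1) + \<alpha> / (real m + 1)"
    "j \<in> {1..m} \<Longrightarrow> mid_incr (L j) = a * (2 / (2 * real m + 1)) + (1 - a) / real m"
    "j \<in> {1..m} \<Longrightarrow> mid_incr (K j) = a * (2 / (2 * real m + 1)) + (1 - a) / (real m + 1)" for j
    using m unfolding P_def E_def L_def K_def by (simp_all add: mid_incr_uO mid_incr_uE mid_incr_vV)
  moreover have "(1 - \<alpha>) / real m + \<alpha> / (real m + 1) = T"
    "(1 - \<alpha>) / (real m + 1) + \<alpha> / (real m + 1) = T - A"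
    "a * (2 / (2 * real m + 1)) + (1 - a) / real m = T"
    "a * (2 / (2 * real m + 1)) + (1 - a) / (real m + 1) = T - Q"
    using m0 by (simp_all add: T_def A_def Q_def a_def divide_simps) (simp_all add: algebra_simps)
  ultimately have components: "mid_incr P = T" "mid_incr E = T - A"
    "j \<in> {1..m} \<Longrightarrow> mid_incr (L j) = T" "j \<in> {1..m} \<Longrightarrow> mid_incr (K j) = T - Q" for j
    by simp_all
  have "lotto_strategy_a m \<alpha> lO lE lam \<kappa> =
      (\<lambda>k. lO * P k + lE * E k + (\<Sum>j=1..m. lam j * L j k) + (\<Sum>j=1..m. \<kappa> j * K j k))"
    by (simp add: fun_eq_iff lotto_strategy_a_def P_def E_def L_def K_def a_def)
  then have "mid_incr (lotto_strategy_a m \<alpha> lO lE lam \<kappa>) =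
      lO * T + lE * (T - A) + (\<Sum>j=1..m. lam j * T) + (\<Sum>j=1..m. \<kappa> j * (T - Q))"
    by (simp add: components)
  also have "\<dots> = T * (lO + lE + (\<Sum>j=1..m. lam j) + (\<Sum>j=1..m. \<kappa> j)) - (lE * A + (\<Sum>j=1..m. \<kappa> j * Q))"
    by (simp add: algebra_simps sum_distrib_left sum_distrib_right sum_subtractf)
  also have "\<dots> = T - (lE * A + (\<Sum>j=1..m. \<kappa> j * Q))"
    unfolding sum1 by simp
  finally show ?thesis by (simp add: T_def A_def Q_def mult.assoc)
qed

lemma mid_incr_lotto_strategy_b:
  assumes m: "1 \<le> m" and sum1: "lO + lE + (\<Sum>j=1..m. lam j) = 1"
  shows "mid_incr (lotto_strategy_b m \<alpha> lO lE lam) =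
    (real m + 1 - \<alpha>) / (real m * (real m + 1)) - lE * ((1 - \<alpha>) / (real m * (real m + 1)))"
proof -
  define T where "T = (real m + 1 - \<alpha>) / (real m * (real m + 1))"
  define A where "A = (1 - \<alpha>) / (real m * (real m + 1))"
  define s where "s = (1 - \<alpha>) * ((2 * real m + 1) / real m)"
  define P where "P k = (1 - \<alpha>) * uO m k + \<alpha> * uO (m + 1) k" for k
  define E where "E k = (1 - \<alpha>) * uE m k + \<alpha> * uO (m + 1) k" for k
  define L where "L j k = s * vV m j k + (1 - s) * uO (m + 1) k" for j k
  have m0: "real m > 0" using m by simp
  have "mid_incr P = (1 - \<alpha>) / real m + \<alpha> / (real m + 1)"
    "mid_incr E = (1 - \<alpha>) / (real m + 1) + \<alpha> / (real m + 1)"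
    "j \<in> {1..m} \<Longrightarrow> mid_incr (L j) = s * (2 / (2 * real m + 1)) + (1 - s) / (real m + 1)" for j
    using m unfolding P_def E_def L_def by (simp_all add: mid_incr_uO mid_incr_uE mid_incr_vV)
  moreover have "(1 - \<alpha>) / real m + \<alpha> / (real m + 1) = T"
    "(1 - \<alpha>) / (real m + 1) + \<alpha> / (real m + 1) = T - A"
    "s * (2 / (2 * real m + 1)) + (1 - s) / (real m + 1) = T"
    using m0 by (simp_all add: T_def A_def s_def divide_simps) (simp_all add: algebra_simps)
  ultimately have components: "mid_incr P = T" "mid_incr E = T - A"
    "j \<in> {1..m} \<Longrightarrow> mid_incr (L j) = T" for j
    by simp_all
  have "lotto_strategy_b m \<alpha> lO lE lam = (\<lambda>k. lO * P k + lE * E k + (\<Sum>j=1..m. lam j * L j k))"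
    by (simp add: fun_eq_iff lotto_strategy_b_def P_def E_def L_def s_def)
  then have "mid_incr (lotto_strategy_b m \<alpha> lO lE lam) = lO * T + lE * (T - A) + (\<Sum>j=1..m. lam j * T)"
    by (simp add: components)
  also have "\<dots> = T * (lO + lE + (\<Sum>j=1..m. lam j)) - lE * A"
    by (simp add: algebra_simps sum_distrib_left sum_distrib_right)
  also have "\<dots> = T - lE * A"
    unfolding sum1 by simp
  finally show ?thesis by (simp add: T_def A_def)
qed

theorem lemma6:
  fixes v1 v2 \<alpha> b lO lE :: real and m :: nat and lam \<kappa> :: "nat \<Rightarrow> real"
    and X Y :: "nat pmf"
  assumes v: "v1 \<ge> v2" "v2 > 0"
    and m: "m \<ge> 1"
    and \<alpha>: "0 < \<alpha>" "\<alpha> < 1"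
    and b: "0 < b" "b \<le> real m"
    and fm: "finite_mean X" "finite_mean Y"
    and means: "mean X = real m + \<alpha>" "mean Y = b"
    and val: "real m * (real m + 1) / b = v1 / 2"
    and NE: "lotto_NE (real m + \<alpha>) b X Y"
    and Y: "\<forall>k. pmf Y k = (1 - b / real m) * (if k = 0 then 1 else 0) + b / real m * uE m k"
    and caseA: "\<alpha> \<le> (real m + 1) / (2 * real m + 1) \<longrightarrow>
       (\<forall>k. pmf X k =
          lO * ((1 - \<alpha>) * uO m k + \<alpha> * uO (m + 1) k)
        + lE * ((1 - \<alpha>) * uE m k + \<alpha> * uO (m + 1) k)
        + (\<Sum>j=1..m. lam j * (\<alpha> * ((2 * real m + 1) / (real m + 1)) * vV m j k
              + (1 - \<alpha> * ((2 * real m + 1) / (real m + 1))) * uO m k))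
        + (\<Sum>j=1..m. \<kappa> j * (\<alpha> * ((2 * real m + 1) / (real m + 1)) * vV m j k
              + (1 - \<alpha> * ((2 * real m + 1) / (real m + 1))) * uE m k)))"
    and caseB: "(real m + 1) / (2 * real m + 1) < \<alpha> \<longrightarrow>
       (\<forall>j\<in>{1..m}. \<kappa> j = 0) \<and>
       (\<forall>k. pmf X k =
          lO * ((1 - \<alpha>) * uO m k + \<alpha> * uO (m + 1) k)
        + lE * ((1 - \<alpha>) * uE m k + \<alpha> * uO (m + 1) k)
        + (\<Sum>j=1..m. lam j * ((1 - \<alpha>) * ((2 * real m + 1) / real m) * vV m j k
              + (1 - (1 - \<alpha>) * ((2 * real m + 1) / real m)) * uO (m + 1) k)))"
    and nonneg: "lO \<ge> 0" "lE \<ge> 0" "\<forall>j\<in>{1..m}. lam j \<ge> 0" "\<forall>j\<in>{1..m}. \<kappa> j \<ge> 0"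
    and sum1: "lO + lE + (\<Sum>j=1..m. lam j) + (\<Sum>j=1..m. \<kappa> j) = 1"
    and mgtb: "real m > b \<longrightarrow> lE = 0 \<and> (\<Sum>j=1..m. \<kappa> j) = 0"
    and eqn: "(real m + 1 - \<alpha>) / (real m * (real m + 1)) - 2 / v2 =
       lE * ((1 - \<alpha>) / (real m * (real m + 1)))
       + (\<Sum>j=1..m. \<kappa> j * (1 / (real m + 1)) * ((1 - \<alpha>) / real m - \<alpha> / (real m + 1)))"
  shows "allpay_NE v1 v2 X Y"
proof -
  have m0: "real m > 0" using m by simp
  define p where "p = b / real m"
  have p: "0 < p" "p \<le> 1" using b m0 by (simp_all add: p_def)
  have Y': "pmf Y k = (1 - p) * (if k = 0 then 1 else 0) + p * uE m k" for k
    using Y by (simp add: p_def)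
  have X_cases: "pmf X = lotto_strategy_a m \<alpha> lO lE lam \<kappa>
      \<or> pmf X = lotto_strategy_b m \<alpha> lO lE lam \<and> (\<forall>j\<in>{1..m}. \<kappa> j = 0)"
    using caseA caseB unfolding fun_eq_iff lotto_strategy_a_def lotto_strategy_b_def
    by (meson not_le)
  have "pmf X k = 0" if "2 * m + 1 < k" for k
    using X_cases lotto_strategy_a_eq_0(1)[OF that] lotto_strategy_b_eq_0(1)[OF that] by auto
  then have supp_X: "set_pmf X \<subseteq> {..2 * m + 1}"
    by (metis atMost_iff not_le set_pmf_iff subsetI)
  have "pmf X 0 = 0" if "p \<noteq> 1"
  proof -
    have "lE = 0" "\<forall>j\<in>{1..m}. \<kappa> j = 0"
      using that mgtb nonneg(4) sum_nonneg_eq_0_iff[of "{1..m}" \<kappa>] p m0 by (auto simp: p_def)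
    then show ?thesis using X_cases lotto_strategy_a_eq_0(2) lotto_strategy_b_eq_0(2) by auto
  qed
  then have zero_X: "0 \<in> set_pmf X \<Longrightarrow> p = 1"
    by (auto simp: set_pmf_iff)
  have "mid_incr (pmf X) = 2 / v2"
    using X_cases
  proof
    assume "pmf X = lotto_strategy_a m \<alpha> lO lE lam \<kappa>"
    then show ?thesis using mid_incr_lotto_strategy_a[OF m sum1] eqn by simp
  next
    assume X: "pmf X = lotto_strategy_b m \<alpha> lO lE lam \<and> (\<forall>j\<in>{1..m}. \<kappa> j = 0)"
    then have "lO + lE + (\<Sum>j=1..m. lam j) = 1" using sum1 by simp
    then show ?thesis using X mid_incr_lotto_strategy_b[OF m] eqn by simp
  qed
  then have slope: "v2 * (mid_cdf X 2 - mid_cdf X 0) = 2"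
    using v(2) by (simp add: mid_cdf_2_minus_0)
  have v1: "v1 * p = 2 * (real m + 1)"
    using val b m0 by (simp add: p_def field_simps)
  have c: "0 < p / (real m + 1)" using p by simp
  have supp_Y: "set_pmf Y \<subseteq> {..2 * m}" and even_Y: "\<And>k. k \<in> set_pmf Y \<Longrightarrow> even k"
    using uE_mixture_support(1)[OF Y' p(2)] by auto
  show ?thesis
    unfolding allpay_NE_def
  proof (intro conjI allI impI)
    fix X' assume "finite_mean X'"
    show "allpay_payoff v1 X' Y \<le> allpay_payoff v1 X Y"
      by (rule allpay_best_response_to_uE_mixture[OF Y' p v1 supp_X zero_X fm(1) \<open>finite_mean X'\<close>])
  next
    fix Y' assume "finite_mean Y'"
    show "allpay_payoff v2 Y' X \<le> allpay_payoff v2 Y X"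
      by (rule allpay_best_response_of_lotto_NE[OF NE supp_Y c uE_mixture_support(2)[OF Y' p(2)]
            m v(2) slope even_Y fm(2) \<open>finite_mean Y'\<close>])
  qed (fact fm)+
qed

end
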